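(* Fix a state $s$, a utility $u:\mathcal S\times\Omega\times\mathcal A\to[0,1]$, a function $Q:\mathcal S\times\Omega\times\mathcal A\to[0,H]$ and priors $\mu_1,\mu_2\in\Delta(\Omega)$, and let $\mathcal B_{1,2}=\mathbb B(\mu_1,\|\mu_1-\mu_2\|_1)$. Then $$\max_{\pi_1\in\mathrm{Pers}(\mu_1,u)}\langle Q,\mu_1\otimes\pi_1\rangle(s)-\max_{\pi_2\in\mathrm{Pers}(\mu_2,u)}\langle Q,\mu_2\otimes\pi_2\rangle(s)\le\mathrm{Gap}(s,\mu_1,\mathcal B_{1,2};Q)+\frac H2\|\mu_1-\mu_2\|_1.$$
   Context: $\mathcal A$ is a finite action set, $\mathcal S$ a state space and $\Omega$ an outcome space; $\Delta(\Omega)$ is the set of probability distributions on $\Omega$ (with densities/mass functions $\mu(\omega)$), and $\|\mu-\mu'\|_1=\int_\Omega|\mu(\omega)-\mu'(\omega)|\,\mathrm d\omega$. A signaling scheme $\pi$ assigns to each $(s,\omega)$ a distribution $\pi(\cdot\mid s,\omega)\in\Delta(\mathcal A)$. For a prior $\mu$ and utility $u$, $\mathrm{Pers}(\mu,u)$ is the set of $\pi$ with $\int_\Omega\mu(\omega)\pi(a\mid s,\omega)[u(s,\omega,a)-u(s,\omega,a')]\,\mathrm d\omega\ge0$ for all $a,a'\in\mathcal A$ and states $s$; for a set $\mathcal B\subseteq\Delta(\Omega)$, $\mathrm{Pers}(\mathcal B,u)=\bigcap_{\mu'\in\mathcal B}\mathrm{Pers}(\mu',u)$. $\langle Q,\mu\otimes\pi\rangle(s)=\mathbb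 E_{\omega\sim\mu,\,a\sim\pi(\cdot\mid s,\omega)}[Q(s,\omega,a)]$. The robustness gap is $\mathrm{Gap}(s,\mu,\mathcal B;Q)=\max_{\pi\in\mathrm{Pers}(\mu,u)}\langle Q,\mu\otimes\pi\rangle(s)-\max_{\pi\in\mathrm{Pers}(\mathcal B,u)}\langle Q,\mu\otimes\pi\rangle(s)$. $\mathbb B(\mu,\epsilon)=\{\mu'\in\Delta(\Omega):\|\mu-\mu'\|_1\le\epsilon\}$. *)

theory Defs
  imports "HOL-Analysis.Analysis"
begin

text \<open>The outcome space \<Omega> is the space of a reference measure M; priors are
  probability densities w.r.t. M. Actions form a finite type 'a; states a type 's.\<close>

definition prior :: "'w measure \<Rightarrow> ('w \<Rightarrow> real) \<Rightarrow> bool" where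
  "prior M \<mu> \<longleftrightarrow> \<mu> \<in> borel_measurable M \<and> (\<forall>\<omega>\<in>space M. 0 \<le> \<mu> \<omega>)
     \<and> integrable M \<mu> \<and> (\<integral>\<omega>. \<mu> \<omega> \<partial>M) = 1"

definition l1dist :: "'w measure \<Rightarrow> ('w \<Rightarrow> real) \<Rightarrow> ('w \<Rightarrow> real) \<Rightarrow> real" where
  "l1dist M \<mu> \<mu>' = (\<integral>\<omega>. \<bar>\<mu> \<omega> - \<mu>' \<omega>\<bar> \<partial>M)"

definition l1ball :: "'w measure \<Rightarrow> ('w \<Rightarrow> real) \<Rightarrow> real \<Rightarrow> ('w \<Rightarrow> real) set" where
  "l1ball M \<mu> \<epsilon> = {\<mu>'. prior M \<mu>' \<and> l1dist M \<mu> \<mu>' \<le> \<epsilon>}"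

text \<open>A signaling scheme: \<pi> s \<omega> a = \<pi>(a | s, \<omega>), a probability distribution over
  the finite action type for each (s, \<omega>), measurable in \<omega>.\<close>
definition scheme :: "'w measure \<Rightarrow> ('s \<Rightarrow> 'w \<Rightarrow> 'a::finite \<Rightarrow> real) \<Rightarrow> bool" where
  "scheme M \<pi> \<longleftrightarrow> (\<forall>s \<omega> a. 0 \<le> \<pi> s \<omega> a) \<and> (\<forall>s \<omega>. (\<Sum>a\<in>UNIV. \<pi> s \<omega> a) = 1)
     \<and> (\<forall>s a. (\<lambda>\<omega>. \<pi> s \<omega> a) \<in> borel_measurable M)"

definition Pers :: "'w measure \<Rightarrow> ('w \<Rightarrow> real) \<Rightarrow> ('s \<Rightarrow> 'w \<Rightarrow> 'a::finite \<Rightarrow> real)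
    \<Rightarrow> ('s \<Rightarrow> 'w \<Rightarrow> 'a \<Rightarrow> real) set" where
  "Pers M \<mu> u = {\<pi>. scheme M \<pi> \<and> (\<forall>s a a'.
      0 \<le> (\<integral>\<omega>. \<mu> \<omega> * \<pi> s \<omega> a * (u s \<omega> a - u s \<omega> a') \<partial>M))}"

definition PersSet :: "'w measure \<Rightarrow> ('w \<Rightarrow> real) set \<Rightarrow> ('s \<Rightarrow> 'w \<Rightarrow> 'a::finite \<Rightarrow> real)
    \<Rightarrow> ('s \<Rightarrow> 'w \<Rightarrow> 'a \<Rightarrow> real) set" where
  "PersSet M B u = {\<pi>. scheme M \<pi> \<and> (\<forall>\<mu>'\<in>B. \<pi> \<in> Pers M \<mu>' u)}"

definition pairing :: "'w measure \<Rightarrow> ('s \<Rightarrow> 'w \<Rightarrow> 'a::finite \<Rightarrow> real) \<Rightarrow> ('w \<Rightarrow> real)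
    \<Rightarrow> ('s \<Rightarrow> 'w \<Rightarrow> 'a \<Rightarrow> real) \<Rightarrow> 's \<Rightarrow> real" where
  "pairing M Q \<mu> \<pi> s = (\<integral>\<omega>. \<mu> \<omega> * (\<Sum>a\<in>UNIV. \<pi> s \<omega> a * Q s \<omega> a) \<partial>M)"

text \<open>The "max" over a set of schemes, rendered as a supremum.\<close>
definition optval :: "'w measure \<Rightarrow> ('s \<Rightarrow> 'w \<Rightarrow> 'a::finite \<Rightarrow> real) \<Rightarrow> ('w \<Rightarrow> real)
    \<Rightarrow> ('s \<Rightarrow> 'w \<Rightarrow> 'a \<Rightarrow> real) set \<Rightarrow> 's \<Rightarrow> real" where
  "optval M Q \<mu> P s = (SUP \<pi>\<in>P. pairing M Q \<mu> \<pi> s)"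

definition Gap :: "'w measure \<Rightarrow> ('s \<Rightarrow> 'w \<Rightarrow> 'a::finite \<Rightarrow> real) \<Rightarrow> 's \<Rightarrow> ('w \<Rightarrow> real)
    \<Rightarrow> ('w \<Rightarrow> real) set \<Rightarrow> ('s \<Rightarrow> 'w \<Rightarrow> 'a \<Rightarrow> real) \<Rightarrow> real" where
  "Gap M u s \<mu> B Q = optval M Q \<mu> (Pers M \<mu> u) s - optval M Q \<mu> (PersSet M B u) s"

end

theory Submission
  imports Defs
begin

text \<open>Every scheme persuasive under all priors of the ball \<open>B\<^sub>1\<^sub>,\<^sub>2\<close> is in particular
  persuasive under \<open>\<mu>\<^sub>2\<close>, since \<open>\<mu>\<^sub>2\<close> lies in that ball. Hence, after cancelling the first
  term of the gap, it suffices to compare \<open>\<langle>Q, \<mu>\<^sub>1 \<otimes> \<pi>\<rangle>\<close> with \<open>\<langle>Q, \<mu>\<^sub>2 \<otimes> \<pi>\<rangle>\<close> for a single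
  scheme \<open>\<pi>\<close>. The integrand \<open>f = \<Sum>\<^sub>a \<pi>(a) Q(a)\<close> takes values in \<open>[0, H]\<close>, and as both priors have
  mass one, \<open>\<integral>(\<mu>\<^sub>1 - \<mu>\<^sub>2) f = \<integral>(\<mu>\<^sub>1 - \<mu>\<^sub>2)(f - H/2) \<le> H/2 \<parallel>\<mu>\<^sub>1 - \<mu>\<^sub>2\<parallel>\<^sub>1\<close>. Comparing the
  suprema needs the set of robustly persuasive schemes to be nonempty: recommending a
  uniformly random best response of the receiver is persuasive under every prior.\<close>

definition best_response :: "('s \<Rightarrow> 'w \<Rightarrow> 'a::finite \<Rightarrow> real) \<Rightarrow> 's \<Rightarrow> 'w \<Rightarrow> 'a \<Rightarrow> real" where
  "best_response u s \<omega> a = (if u s \<omega> a = (MAX b. u s \<omega> b) then 1 else 0) /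
     (\<Sum>b\<in>UNIV. if u s \<omega> b = (MAX c. u s \<omega> c) then 1 else 0)"

lemma argmax_count_ge_one:
  fixes v :: "'a::finite \<Rightarrow> real"
  shows "(\<Sum>b\<in>UNIV. if v b = (MAX c. v c) then 1 else 0::real) \<ge> 1"
proof -
  have "(MAX c. v c) \<in> range v" by (rule Max_in) auto
  then obtain b where b: "v b = (MAX c. v c)" by (metis imageE)
  have "(1::real) = (if v b = (MAX c. v c) then 1 else 0)" using b by simp
  also have "\<dots> \<le> (\<Sum>b\<in>UNIV. if v b = (MAX c. v c) then 1 else 0::real)"
    by (rule member_le_sum) auto
  finally show ?thesis .
qed

lemma best_response_nonneg: "0 \<le> best_response u s \<omega> a"
  unfolding best_response_def using argmax_count_ge_one[of "u s \<omega>"] by auto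

lemma scheme_best_response:
  assumes "\<And>s a. (\<lambda>\<omega>. u s \<omega> a) \<in> borel_measurable M"
  shows "scheme M (best_response u)"
  unfolding scheme_def
proof (intro conjI allI)
  fix s \<omega>
  have "(\<Sum>b\<in>UNIV. if u s \<omega> b = (MAX c. u s \<omega> c) then 1 else 0::real) \<noteq> 0"
    using argmax_count_ge_one[of "u s \<omega>"] by auto
  then show "(\<Sum>a\<in>UNIV. best_response u s \<omega> a) = 1"
    unfolding best_response_def sum_divide_distrib[symmetric] by simp
next
  fix s a
  show "(\<lambda>\<omega>. best_response u s \<omega> a) \<in> borel_measurable M"
    unfolding best_response_def using assms by measurable
qed (rule best_response_nonneg)

lemma best_response_in_Pers:
  assumes "\<And>s a. (\<lambda>\<omega>. u s \<omega> a) \<in> borel_measurable M"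
    and "\<forall>\<omega>\<in>space M. 0 \<le> \<mu> \<omega>"
  shows "best_response u \<in> Pers M \<mu> u"
  unfolding Pers_def
proof (intro CollectI conjI allI scheme_best_response assms(1))
  fix s a a'
  have "0 \<le> best_response u s \<omega> a * (u s \<omega> a - u s \<omega> a')" for \<omega>
  proof (cases "u s \<omega> a = (MAX b. u s \<omega> b)")
    case True
    then have "u s \<omega> a' \<le> u s \<omega> a" by simp
    then show ?thesis by (simp add: best_response_nonneg)
  qed (simp add: best_response_def)
  then show "0 \<le> (\<integral>\<omega>. \<mu> \<omega> * best_response u s \<omega> a * (u s \<omega> a - u s \<omega> a') \<partial>M)"
    using assms(2) by (intro integral_nonneg_AE AE_I2) (simp add: mult.assoc)
qed

lemma PersSet_subset_Pers: "\<mu> \<in> B \<Longrightarrow> PersSet M B u \<subseteq> Pers M \<mu> u"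
  unfolding PersSet_def by auto

lemma convex_combination_bounds:
  fixes w x :: "'a::finite \<Rightarrow> real"
  assumes "\<And>a. 0 \<le> w a" and "(\<Sum>a\<in>UNIV. w a) = 1" and "\<And>a. lo \<le> x a \<and> x a \<le> hi"
  shows "lo \<le> (\<Sum>a\<in>UNIV. w a * x a) \<and> (\<Sum>a\<in>UNIV. w a * x a) \<le> hi"
proof
  have "lo = (\<Sum>a\<in>UNIV. w a * lo)" using assms(2) by (simp add: sum_distrib_right[symmetric])
  also have "\<dots> \<le> (\<Sum>a\<in>UNIV. w a * x a)" using assms by (intro sum_mono mult_left_mono) auto
  finally show "lo \<le> (\<Sum>a\<in>UNIV. w a * x a)" .
  have "(\<Sum>a\<in>UNIV. w a * x a) \<le> (\<Sum>a\<in>UNIV. w a * hi)"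
    using assms by (intro sum_mono mult_left_mono) auto
  also have "\<dots> = hi" using assms(2) by (simp add: sum_distrib_right[symmetric])
  finally show "(\<Sum>a\<in>UNIV. w a * x a) \<le> hi" .
qed

lemma integrable_mult_bounded:
  fixes g f :: "'w \<Rightarrow> real"
  assumes "integrable M g" and "f \<in> borel_measurable M" and "\<And>x. \<bar>f x\<bar> \<le> C"
  shows "integrable M (\<lambda>x. g x * f x)"
proof (rule Bochner_Integration.integrable_bound[where f="\<lambda>x. C * \<bar>g x\<bar>"])
  show "integrable M (\<lambda>x. C * \<bar>g x\<bar>)" using assms(1) by simp
  show "(\<lambda>x. g x * f x) \<in> borel_measurable M" using assms(1,2) by measurable
  have "0 \<le> C" using abs_ge_zero assms(3) order_trans by blast
  moreover have "\<bar>f x\<bar> * \<bar>g x\<bar> \<le> C * \<bar>g x\<bar>" for x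
    using assms(3) by (intro mult_right_mono) auto
  ultimately show "AE x in M. norm (g x * f x) \<le> norm (C * \<bar>g x\<bar>)"
    by (intro AE_I2) (simp add: abs_mult mult.commute)
qed

text \<open>The constant \<open>H/2\<close> (rather than \<open>H\<close>) comes from centring \<open>f\<close>, which is possible
  because \<open>g\<^sub>1\<close> and \<open>g\<^sub>2\<close> have the same total mass.\<close>
lemma integral_diff_le_half_l1:
  fixes g1 g2 f :: "'w \<Rightarrow> real"
  assumes g1: "integrable M g1" and g2: "integrable M g2"
    and mass: "(\<integral>x. g1 x \<partial>M) = (\<integral>x. g2 x \<partial>M)"
    and f: "f \<in> borel_measurable M" and f_range: "\<And>x. 0 \<le> f x \<and> f x \<le> H"
  shows "(\<integral>x. g1 x * f x \<partial>M) - (\<integral>x. g2 x * f x \<partial>M) \<le> H / 2 * (\<integral>x. \<bar>g1 x - g2 x\<bar> \<partial>M)"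
proof -
  have centred_bound: "\<bar>f x - H / 2\<bar> \<le> H / 2" for x
    using f_range[of x] by linarith
  have centred: "integrable M (\<lambda>x. (g1 x - g2 x) * (f x - H / 2))"
    using g1 g2 f centred_bound by (intro integrable_mult_bounded[where C="H / 2"]) auto
  have "\<bar>f x\<bar> \<le> H" for x using f_range[of x] by auto
  then have i1: "integrable M (\<lambda>x. g1 x * f x)" and i2: "integrable M (\<lambda>x. g2 x * f x)"
    using g1 g2 f by (auto intro: integrable_mult_bounded)
  have "(\<integral>x. (g1 x - g2 x) * (f x - H / 2) \<partial>M)
      = (\<integral>x. (g1 x * f x - g2 x * f x) - (H / 2 * g1 x - H / 2 * g2 x) \<partial>M)"
    by (intro Bochner_Integration.integral_cong) (simp_all add: field_simps)
  also have "\<dots> = ((\<integral>x. g1 x * f x \<partial>M) - (\<integral>x. g2 x * f x \<partial>M))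
      - H / 2 * ((\<integral>x. g1 x \<partial>M) - (\<integral>x. g2 x \<partial>M))"
    using i1 i2 g1 g2 by (simp add: right_diff_distrib)
  finally have "(\<integral>x. g1 x * f x \<partial>M) - (\<integral>x. g2 x * f x \<partial>M)
      = (\<integral>x. (g1 x - g2 x) * (f x - H / 2) \<partial>M)"
    using mass by simp
  also have "\<dots> \<le> (\<integral>x. H / 2 * \<bar>g1 x - g2 x\<bar> \<partial>M)"
  proof (rule integral_mono[OF centred])
    show "integrable M (\<lambda>x. H / 2 * \<bar>g1 x - g2 x\<bar>)" using g1 g2 by simp
    fix x
    have "(g1 x - g2 x) * (f x - H / 2) \<le> \<bar>g1 x - g2 x\<bar> * \<bar>f x - H / 2\<bar>"
      by (metis abs_ge_self abs_mult)
    also have "\<dots> \<le> \<bar>g1 x - g2 x\<bar> * (H / 2)"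
      using centred_bound by (intro mult_left_mono) auto
    finally show "(g1 x - g2 x) * (f x - H / 2) \<le> H / 2 * \<bar>g1 x - g2 x\<bar>"
      by (simp add: mult.commute)
  qed
  finally show ?thesis by simp
qed

lemma cSUP_le_cSUP_plus:
  fixes f g :: "'b \<Rightarrow> real"
  assumes "A \<noteq> {}" and "A \<subseteq> B" and "bdd_above (g ` B)" and "\<And>x. x \<in> A \<Longrightarrow> f x \<le> g x + c"
  shows "(SUP x\<in>A. f x) \<le> (SUP x\<in>B. g x) + c"
proof (rule cSUP_least[OF assms(1)])
  fix x assume "x \<in> A"
  then have "g x \<le> (SUP x\<in>B. g x)" using assms(2,3) by (auto intro: cSUP_upper)
  then show "f x \<le> (SUP x\<in>B. g x) + c" using assms(4)[OF \<open>x \<in> A\<close>] by simp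
qed

context
  fixes M :: "'w measure" and Q \<pi> :: "'s \<Rightarrow> 'w \<Rightarrow> 'a::finite \<Rightarrow> real" and H :: real and s :: 's
  assumes scheme: "scheme M \<pi>"
    and Q_range: "\<And>\<omega> a. 0 \<le> Q s \<omega> a \<and> Q s \<omega> a \<le> H"
    and Q_meas: "\<And>a. (\<lambda>\<omega>. Q s \<omega> a) \<in> borel_measurable M"
begin

lemma scheme_average_range: "0 \<le> (\<Sum>a\<in>UNIV. \<pi> s \<omega> a * Q s \<omega> a) \<and> (\<Sum>a\<in>UNIV. \<pi> s \<omega> a * Q s \<omega> a) \<le> H"
  using scheme Q_range unfolding scheme_def by (intro convex_combination_bounds) auto

lemma scheme_average_measurable: "(\<lambda>\<omega>. \<Sum>a\<in>UNIV. \<pi> s \<omega> a * Q s \<omega> a) \<in> borel_measurable M"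
  using scheme Q_meas unfolding scheme_def by (intro borel_measurable_sum borel_measurable_times) auto

lemma pairing_le:
  assumes "prior M \<mu>"
  shows "pairing M Q \<mu> \<pi> s \<le> H"
proof -
  have \<mu>: "integrable M \<mu>" "\<forall>\<omega>\<in>space M. 0 \<le> \<mu> \<omega>" "(\<integral>\<omega>. \<mu> \<omega> \<partial>M) = 1"
    using assms unfolding prior_def by auto
  have "\<bar>\<Sum>a\<in>UNIV. \<pi> s \<omega> a * Q s \<omega> a\<bar> \<le> H" for \<omega>
    using scheme_average_range[of \<omega>] by auto
  then have "integrable M (\<lambda>\<omega>. \<mu> \<omega> * (\<Sum>a\<in>UNIV. \<pi> s \<omega> a * Q s \<omega> a))"
    using \<mu> scheme_average_measurable by (intro integrable_mult_bounded)
  then have "pairing M Q \<mu> \<pi> s \<le> (\<integral>\<omega>. \<mu> \<omega> * H \<partial>M)"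
    unfolding pairing_def using \<mu> scheme_average_range
    by (intro integral_mono_AE AE_I2) (auto intro: mult_left_mono)
  also have "\<dots> = H" using \<mu> by simp
  finally show ?thesis .
qed

lemma pairing_diff_le_l1dist:
  assumes "prior M \<mu>1" and "prior M \<mu>2"
  shows "pairing M Q \<mu>1 \<pi> s - pairing M Q \<mu>2 \<pi> s \<le> H / 2 * l1dist M \<mu>1 \<mu>2"
  unfolding pairing_def l1dist_def
  using assms scheme_average_measurable scheme_average_range
  by (intro integral_diff_le_half_l1) (auto simp: prior_def)

end

theorem mainTheorem9:
  fixes M :: "'w measure"
    and u Q :: "'s \<Rightarrow> 'w \<Rightarrow> 'a::finite \<Rightarrow> real"
    and H :: real and s :: 's
    and \<mu>1 \<mu>2 :: "'w \<Rightarrow> real"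
  assumes u_range: "\<And>s \<omega> a. 0 \<le> u s \<omega> a \<and> u s \<omega> a \<le> 1"
    and Q_range: "\<And>s \<omega> a. 0 \<le> Q s \<omega> a \<and> Q s \<omega> a \<le> H"
    and u_meas: "\<And>s a. (\<lambda>\<omega>. u s \<omega> a) \<in> borel_measurable M"
    and Q_meas: "\<And>s a. (\<lambda>\<omega>. Q s \<omega> a) \<in> borel_measurable M"
    and p1: "prior M \<mu>1" and p2: "prior M \<mu>2"
  shows "optval M Q \<mu>1 (Pers M \<mu>1 u) s - optval M Q \<mu>2 (Pers M \<mu>2 u) s
           \<le> Gap M u s \<mu>1 (l1ball M \<mu>1 (l1dist M \<mu>1 \<mu>2)) Q + H / 2 * l1dist M \<mu>1 \<mu>2"
proof -
  define B where "B = l1ball M \<mu>1 (l1dist M \<mu>1 \<mu>2)"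
  have "\<mu>2 \<in> B" unfolding B_def l1ball_def using p2 by simp
  then have robust_subset: "PersSet M B u \<subseteq> Pers M \<mu>2 u" by (rule PersSet_subset_Pers)
  have "best_response u \<in> PersSet M B u"
    unfolding PersSet_def B_def l1ball_def prior_def
    using scheme_best_response[OF u_meas] best_response_in_Pers[OF u_meas] by auto
  moreover have "bdd_above ((\<lambda>\<pi>. pairing M Q \<mu>2 \<pi> s) ` Pers M \<mu>2 u)"
    using pairing_le[where Q=Q and s=s, OF _ Q_range Q_meas p2]
    by (intro bdd_aboveI2) (auto simp: Pers_def)
  moreover have "pairing M Q \<mu>1 \<pi> s \<le> pairing M Q \<mu>2 \<pi> s + H / 2 * l1dist M \<mu>1 \<mu>2"
    if "\<pi> \<in> PersSet M B u" for \<pi>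
  proof -
    have "scheme M \<pi>" using that by (simp add: PersSet_def)
    from pairing_diff_le_l1dist[where Q=Q and s=s, OF this Q_range Q_meas p1 p2]
    show ?thesis by linarith
  qed
  ultimately have "optval M Q \<mu>1 (PersSet M B u) s
      \<le> optval M Q \<mu>2 (Pers M \<mu>2 u) s + H / 2 * l1dist M \<mu>1 \<mu>2"
    unfolding optval_def using robust_subset by (intro cSUP_le_cSUP_plus) auto
  then show ?thesis unfolding Gap_def B_def by simp
qed

end
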